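(* Let $E$ be a finite geometric commutative monoid of idempotents with set of atoms $A$. Then $E$ has a monoid presentation with generators $a\in A$ and relations: $a^2=a$ for $a\in A$; $ab=ba$ for $a,b\in A$; and, for every minimally dependent set $\{a_1,\dots,a_k\}$ of atoms, $\widehat{a}_1a_2\cdots a_k=a_1\widehat{a}_2a_3\cdots a_k=\cdots=a_1\cdots a_{k-1}\widehat{a}_k$, where $\widehat{a}_i$ means that $a_i$ is omitted.
   Context: A finite commutative monoid of idempotents $E$ is a join-semilattice with least element $\mathbf 0$ (the identity) via $x\le y\iff xy=y$, with $xy=x\vee y$. It is graded if all saturated chains from $\mathbf 0$ to any $x$ have the same length $\mathrm{rk}(x)$; atoms are the elements of rank $1$; it is atomic if every element is a join of atoms. $E$ is geometric if it is a graded atomic lattice with $\mathrm{rk}(a\vee b)+\mathrm{rk}(a\wedge b)\le\mathrm{rk}(a)+\mathrm{rk}(b)$ for all $a,b$. A set $S$ of atoms is independent if $\bigvee(S\setminus\{s\})<\bigvee S$ for all $s\in S$, dependent otherwise, and minimally dependent if dependent with every proper subset independent. *)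

theory Defs
  imports Main
begin

text \<open>A finite commutative monoid of idempotents is modelled as a type
  'a of sort {finite, comm_monoid_mult} with x * x = x for all x.
  The identity 1 is the least element 0 of the join-semilattice.\<close>

definition mleq :: "'a::comm_monoid_mult \<Rightarrow> 'a \<Rightarrow> bool" where
  "mleq x y \<longleftrightarrow> x * y = y"

definition mless :: "'a::comm_monoid_mult \<Rightarrow> 'a \<Rightarrow> bool" where
  "mless x y \<longleftrightarrow> mleq x y \<and> x \<noteq> y"

definition mcovers :: "'a::comm_monoid_mult \<Rightarrow> 'a \<Rightarrow> bool" where
  "mcovers x y \<longleftrightarrow> mless x y \<and> \<not> (\<exists>z. mless x z \<and> mless z y)"

text \<open>Saturated chain from the least element 1 to x, listed as c0 = 1, ..., cn = x;
  its length is n = length c - 1.\<close>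
definition sat_chain :: "'a::comm_monoid_mult list \<Rightarrow> 'a \<Rightarrow> bool" where
  "sat_chain c x \<longleftrightarrow> c \<noteq> [] \<and> hd c = 1 \<and> last c = x \<and>
     (\<forall>i. Suc i < length c \<longrightarrow> mcovers (c ! i) (c ! Suc i))"

definition graded :: "'a::{finite,comm_monoid_mult} itself \<Rightarrow> bool" where
  "graded _ \<longleftrightarrow> (\<forall>(x::'a) c d. sat_chain c x \<and> sat_chain d x \<longrightarrow> length c = length d)"

definition rk :: "'a::comm_monoid_mult \<Rightarrow> nat" where
  "rk x = (SOME n. \<exists>c. sat_chain c x \<and> length c = Suc n)"

definition atom :: "'a::comm_monoid_mult \<Rightarrow> bool" where
  "atom a \<longleftrightarrow> rk a = 1"

definition join_set :: "'a::comm_monoid_mult set \<Rightarrow> 'a" where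
  "join_set S = \<Prod>S"

definition atomic :: "'a::{finite,comm_monoid_mult} itself \<Rightarrow> bool" where
  "atomic _ \<longleftrightarrow> (\<forall>x::'a. \<exists>S. (\<forall>a\<in>S. atom a) \<and> x = join_set S)"

definition is_meet :: "'a::comm_monoid_mult \<Rightarrow> 'a \<Rightarrow> 'a \<Rightarrow> bool" where
  "is_meet a b m \<longleftrightarrow> mleq m a \<and> mleq m b \<and> (\<forall>z. mleq z a \<and> mleq z b \<longrightarrow> mleq z m)"

definition meet :: "'a::comm_monoid_mult \<Rightarrow> 'a \<Rightarrow> 'a" where
  "meet a b = (THE m. is_meet a b m)"

definition geometric :: "'a::{finite,comm_monoid_mult} itself \<Rightarrow> bool" where
  "geometric T \<longleftrightarrow> graded T \<and> atomic T \<and>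
     (\<forall>a b::'a. \<exists>m. is_meet a b m) \<and>
     (\<forall>a b::'a. rk (a * b) + rk (meet a b) \<le> rk a + rk b)"

definition independent :: "'a::comm_monoid_mult set \<Rightarrow> bool" where
  "independent S \<longleftrightarrow> (\<forall>s\<in>S. mless (join_set (S - {s})) (join_set S))"

definition min_dependent :: "'a::comm_monoid_mult set \<Rightarrow> bool" where
  "min_dependent S \<longleftrightarrow> (\<forall>a\<in>S. atom a) \<and> \<not> independent S \<and>
     (\<forall>T. T \<subset> S \<longrightarrow> independent T)"

inductive mcong :: "('b list \<times> 'b list) set \<Rightarrow> 'b list \<Rightarrow> 'b list \<Rightarrow> bool"
  for R where
  base: "(x, y) \<in> R \<Longrightarrow> mcong R (u @ x @ v) (u @ y @ v)"
| refl: "mcong R w w"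
| sym: "mcong R w w' \<Longrightarrow> mcong R w' w"
| trans: "mcong R w w' \<Longrightarrow> mcong R w' w'' \<Longrightarrow> mcong R w w''"

definition omit :: "nat \<Rightarrow> 'b list \<Rightarrow> 'b list" where
  "omit i xs = take i xs @ drop (Suc i) xs"

definition pres_rels :: "'a::comm_monoid_mult itself \<Rightarrow> ('a list \<times> 'a list) set" where
  "pres_rels _ =
     {([a, a], [a]) | a::'a. atom a}
   \<union> {([a, b], [b, a]) | a b::'a. atom a \<and> atom b}
   \<union> {(omit i xs, omit j xs) | (xs::'a list) i j.
        distinct xs \<and> min_dependent (set xs) \<and> i < length xs \<and> j < length xs}"

definition has_presentation :: "'a::monoid_mult itself \<Rightarrow> ('a \<Rightarrow> bool) \<Rightarrow> ('a list \<times> 'a list) set \<Rightarrow> bool" where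
  "has_presentation _ gen R \<longleftrightarrow>
     (\<forall>x::'a. \<exists>w. (\<forall>a\<in>set w. gen a) \<and> prod_list w = x) \<and>
     (\<forall>u v. (\<forall>a\<in>set u. gen a) \<and> (\<forall>a\<in>set v. gen a) \<longrightarrow>
        (prod_list u = prod_list v \<longleftrightarrow> mcong R u v))"

end

theory Submission
  imports Defs
begin

text \<open>Modulo idempotence and commutation a word in the atoms only matters through its set of
  letters. The circuit relations hold in E because for a minimally dependent set D of atoms every
  D - {c} already has join \<Prod>D: rank counting (k independent atoms have rank k, a join of k atoms
  has rank at most k, by semimodularity) rules out a drop in rank. For completeness it suffices to
  show u \<equiv> u a whenever the atom a lies below \<Prod>u. Then set u \<union> {a} is dependent and contains
  a minimally dependent D. If a \<in> D, a circuit relation trades D - {a} \<subseteq> set u for a set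
  containing a. Otherwise some letter d \<in> D can be deleted from u by a circuit relation, and one
  inducts on the number of distinct letters.\<close>

lemma mcong_append: "mcong R u v \<Longrightarrow> mcong R (p @ u @ q) (p @ v @ q)"
proof (induction rule: mcong.induct)
  case (base x y u v)
  then show ?case using mcong.base[of x y R "p @ u" "v @ q"] by simp
qed (auto intro: mcong.intros)

locale idempotent_commuting_generators =
  fixes gen :: "'b \<Rightarrow> bool" and R :: "('b list \<times> 'b list) set"
  assumes idem_rel: "gen a \<Longrightarrow> ([a, a], [a]) \<in> R"
    and comm_rel: "gen a \<Longrightarrow> gen b \<Longrightarrow> ([a, b], [b, a]) \<in> R"
begin

abbreviation gen_word :: "'b list \<Rightarrow> bool" where
  "gen_word w \<equiv> \<forall>a\<in>set w. gen a"

lemma mcong_Cons_snoc: "gen a \<Longrightarrow> gen_word w \<Longrightarrow> mcong R (a # w) (w @ [a])"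
proof (induction w)
  case Nil
  then show ?case by (simp add: mcong.refl)
next
  case (Cons b w)
  have "mcong R ([] @ [a, b] @ w) ([] @ [b, a] @ w)"
    using Cons.prems by (intro mcong.base comm_rel) auto
  moreover have "mcong R ([b] @ (a # w) @ []) ([b] @ (w @ [a]) @ [])"
    using Cons by (intro mcong_append) simp
  ultimately show ?case by (auto intro: mcong.trans)
qed

lemma mcong_append_commute: "gen_word u \<Longrightarrow> gen_word v \<Longrightarrow> mcong R (u @ v) (v @ u)"
proof (induction u)
  case Nil
  then show ?case by (simp add: mcong.refl)
next
  case (Cons a u)
  have "mcong R ([a] @ (u @ v) @ []) ([a] @ (v @ u) @ [])"
    using Cons by (intro mcong_append) auto
  moreover have "mcong R ([] @ (a # v) @ u) ([] @ (v @ [a]) @ u)"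
    using Cons by (intro mcong_append mcong_Cons_snoc) auto
  ultimately show ?case by (auto intro: mcong.trans)
qed

lemma mcong_snoc_member:
  assumes "gen_word u" "a \<in> set u"
  shows "mcong R u (u @ [a])"
proof -
  obtain p q where u: "u = p @ a # q" using assms(2) by (metis split_list)
  have "mcong R ((p @ [a]) @ (q @ [a]) @ []) ((p @ [a]) @ (a # q) @ [])"
    using assms u by (intro mcong_append mcong.sym[OF mcong_Cons_snoc]) auto
  moreover have "mcong R (p @ [a, a] @ q) (p @ [a] @ q)"
    using assms u by (intro mcong.base idem_rel) auto
  ultimately have "mcong R (u @ [a]) u" using u by (auto intro: mcong.trans)
  then show ?thesis by (rule mcong.sym)
qed

lemma mcong_append_subset: "gen_word u \<Longrightarrow> set v \<subseteq> set u \<Longrightarrow> mcong R u (u @ v)"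
proof (induction v arbitrary: u)
  case Nil
  then show ?case by (simp add: mcong.refl)
next
  case (Cons b v)
  have "mcong R u (u @ [b])" using Cons by (intro mcong_snoc_member) auto
  moreover have "mcong R (u @ [b]) ((u @ [b]) @ v)" using Cons by (intro Cons.IH) auto
  ultimately show ?case by (auto intro: mcong.trans)
qed

lemma mcong_if_set_eq:
  assumes "gen_word u" "gen_word v" "set u = set v"
  shows "mcong R u v"
proof -
  have "mcong R u (u @ v)" using assms by (intro mcong_append_subset) auto
  moreover have "mcong R (u @ v) (v @ u)" using assms by (intro mcong_append_commute)
  moreover have "mcong R v (v @ u)" using assms by (intro mcong_append_subset) auto
  ultimately show ?thesis by (meson mcong.sym mcong.trans)
qed

end

lemma set_omit:
  assumes "distinct xs" "i < length xs"
  shows "set (omit i xs) = set xs - {xs ! i}"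
proof -
  have xs: "xs = take i xs @ xs ! i # drop (Suc i) xs" using assms(2) by (rule id_take_nth_drop)
  then have "distinct (take i xs @ xs ! i # drop (Suc i) xs)" using assms(1) by simp
  then show ?thesis unfolding omit_def by (subst (3) xs) auto
qed

lemma mcong_min_dependent_omit:
  fixes D :: "'a::comm_monoid_mult set"
  assumes "finite D" "min_dependent D" "a \<in> D" "b \<in> D"
  obtains w1 w2 where "set w1 = D - {a}" "set w2 = D - {b}" "mcong (pres_rels TYPE('a)) w1 w2"
proof -
  obtain xs where xs: "set xs = D" "distinct xs" using finite_distinct_list[OF assms(1)] by blast
  obtain i j where ij: "i < length xs" "xs ! i = a" "j < length xs" "xs ! j = b"
    using assms(3,4) xs(1) by (metis in_set_conv_nth)
  have "(omit i xs, omit j xs) \<in> pres_rels TYPE('a)"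
    unfolding pres_rels_def using xs ij assms(2) by blast
  then have "mcong (pres_rels TYPE('a)) ([] @ omit i xs @ []) ([] @ omit j xs @ [])"
    by (rule mcong.base)
  moreover have "set (omit i xs) = D - {a}" "set (omit j xs) = D - {b}"
    using set_omit[OF xs(2)] xs(1) ij by auto
  ultimately show ?thesis using that by simp
qed

lemma ex_min_dependent_subset:
  fixes S :: "'a::comm_monoid_mult set"
  assumes "finite S" "\<forall>a\<in>S. atom a" "\<not> independent S"
  obtains D where "D \<subseteq> S" "min_dependent D"
proof -
  obtain D where D: "D \<subseteq> S" "\<not> independent D"
    and least: "\<And>T. T \<subseteq> S \<Longrightarrow> \<not> independent T \<Longrightarrow> card D \<le> card T"
    using ex_has_least_nat[of "\<lambda>D. D \<subseteq> S \<and> \<not> independent D" S card] assms(3) by blast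
  have "independent T" if "T \<subset> D" for T
  proof (rule ccontr)
    assume "\<not> independent T"
    then have "card D \<le> card T" using least that D(1) by blast
    moreover have "card T < card D"
      using that D(1) assms(1) by (meson psubset_card_mono rev_finite_subset)
    ultimately show False by simp
  qed
  then show ?thesis using that D assms(2) by (auto simp: min_dependent_def)
qed

locale idempotent_monoid =
  fixes T :: "'a::{finite,comm_monoid_mult} itself"
  assumes idem: "\<And>x::'a. x * x = x"
begin

lemma mleq_refl [simp]: "mleq x (x::'a)"
  by (simp add: mleq_def idem)

lemma mleq_trans: "mleq x y \<Longrightarrow> mleq y z \<Longrightarrow> mleq (x::'a) z"
  unfolding mleq_def by (metis mult.assoc)

lemma mleq_antisym: "mleq x y \<Longrightarrow> mleq y x \<Longrightarrow> (x::'a) = y"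
  unfolding mleq_def by (metis mult.commute)

lemma mleq_one [simp]: "mleq 1 (x::'a)"
  by (simp add: mleq_def)

lemma mleq_mult: "mleq x (y * (x::'a))"
  unfolding mleq_def by (metis mult.assoc mult.commute idem)

lemma mless_trans: "mless x y \<Longrightarrow> mless y z \<Longrightarrow> mless (x::'a) z"
  unfolding mless_def using mleq_trans mleq_antisym by blast

lemma trans_mless: "trans {(x, y::'a). mless x y}"
  unfolding trans_def using mless_trans by blast

lemma acyclic_mless: "acyclic {(x, y::'a). mless x y}"
  unfolding acyclic_irrefl trancl_id[OF trans_mless] irrefl_def by (simp add: mless_def)

lemma wf_mless: "wf {(x, y::'a). mless x y}"
  by (rule finite_acyclic_wf) (simp_all add: acyclic_mless)

lemma ex_lower_cover_above:
  assumes "mless x (y::'a)"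
  obtains z where "mleq x z" "mcovers z y"
proof -
  have "wf ({(x, y::'a). mless x y}\<inverse>)"
    by (rule finite_acyclic_wf_converse) (simp_all add: acyclic_mless)
  from wfE_min[OF this, of x "{z. mleq x z \<and> mless z y}"] assms
  obtain z where z: "mleq x z" "mless z y"
    and max: "\<And>w. mless z w \<Longrightarrow> \<not> (mleq x w \<and> mless w y)"
    by (auto simp: mless_def)
  have "mcovers z y"
    unfolding mcovers_def using z max by (auto simp: mless_def intro: mleq_trans)
  with z that show ?thesis by blast
qed

lemma sat_chain_snoc:
  assumes "sat_chain c z" "mcovers z y"
  shows "sat_chain (c @ [y]) y"
  unfolding sat_chain_def
proof (intro conjI allI impI)
  fix i assume i: "Suc i < length (c @ [y])"
  show "mcovers ((c @ [y]) ! i) ((c @ [y]) ! Suc i)"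
  proof (cases "Suc i < length c")
    case True
    then show ?thesis using assms(1) by (simp add: sat_chain_def nth_append)
  next
    case False
    then have "i = length c - 1" using i by simp
    moreover have "c ! (length c - 1) = z"
      using assms(1) unfolding sat_chain_def by (metis last_conv_nth)
    ultimately show ?thesis using assms(2) False i by (simp add: nth_append)
  qed
qed (use assms(1) in \<open>simp_all add: sat_chain_def\<close>)

lemma sat_chain_extend:
  "sat_chain c x \<Longrightarrow> mless x (y::'a) \<Longrightarrow> \<exists>c'. sat_chain c' y \<and> length c < length c'"
  using wf_mless
proof (induction y rule: wf_induct_rule)
  case (less y)
  obtain z where z: "mleq x z" "mcovers z y" using ex_lower_cover_above[OF less.prems(2)] .
  obtain c'' where "sat_chain c'' z" "length c \<le> length c''"
  proof (cases "x = z")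
    case True
    with less.prems(1) that show ?thesis by blast
  next
    case False
    then have "mless x z" using z(1) by (simp add: mless_def)
    with less.IH less.prems(1) z(2) that show ?thesis
      by (fastforce simp: mcovers_def)
  qed
  then show ?case using sat_chain_snoc[OF _ z(2)] by fastforce
qed

lemma ex_sat_chain: "\<exists>c. sat_chain c (y::'a)"
proof -
  have "sat_chain [1::'a] 1" by (simp add: sat_chain_def)
  then show ?thesis using sat_chain_extend[of "[1]" 1 y] by (cases "y = 1") (auto simp: mless_def)
qed

lemma prod_absorb: "a \<in> S \<Longrightarrow> a * \<Prod>S = \<Prod>(S::'a set)"
  by (metis prod.remove[of S a] finite mult.assoc idem)

lemma mleq_prod: "a \<in> S \<Longrightarrow> mleq a (\<Prod>(S::'a set))"
  by (simp add: mleq_def prod_absorb)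

lemma prod_list_eq_prod_set: "prod_list w = \<Prod>(set (w::'a list))"
proof (induction w)
  case Nil
  then show ?case by simp
next
  case (Cons a w)
  then show ?case by (cases "a \<in> set w") (simp_all add: prod_absorb insert_absorb)
qed

sublocale idempotent_commuting_generators atom "pres_rels TYPE('a)"
  by unfold_locales (auto simp: pres_rels_def)

end

locale graded_idempotent_monoid = idempotent_monoid T
  for T :: "'a::{finite,comm_monoid_mult} itself" +
  assumes graded: "graded TYPE('a)"
begin

lemma rk_sat_chain:
  assumes "sat_chain c (x::'a)"
  shows "rk x = length c - 1"
proof -
  have "\<exists>n c. sat_chain c x \<and> length c = Suc n"
    using assms by (intro exI[of _ "length c - 1"] exI[of _ c]) (auto simp: sat_chain_def)
  from someI_ex[OF this] obtain c' where c': "sat_chain c' x" "length c' = Suc (rk x)"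
    unfolding rk_def by blast
  moreover have "length c' = length c"
    using graded c'(1) assms unfolding graded_def by blast
  ultimately show ?thesis by simp
qed

lemma rk_one [simp]: "rk (1::'a) = 0"
  using rk_sat_chain[of "[1]" 1] by (simp add: sat_chain_def)

lemma rk_strict_mono: "mless x (y::'a) \<Longrightarrow> rk x < rk y"
proof -
  assume xy: "mless x y"
  obtain c where c: "sat_chain c x" using ex_sat_chain by blast
  then obtain c' where "sat_chain c' y" "length c < length c'"
    using sat_chain_extend xy by blast
  moreover have "c \<noteq> []" using c by (simp add: sat_chain_def)
  ultimately show ?thesis using rk_sat_chain[OF c] rk_sat_chain[of c' y] by (cases c) auto
qed

lemma min_dependent_ex_other:
  assumes "min_dependent (D::'a set)" "d \<in> D"
  obtains e where "e \<in> D" "e \<noteq> d"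
proof -
  have "D \<noteq> {d}"
  proof
    assume D: "D = {d}"
    then have "mless 1 d" using assms(1) by (auto simp: min_dependent_def atom_def mless_def)
    then have "independent D" using D by (simp add: independent_def join_set_def)
    then show False using assms(1) by (simp add: min_dependent_def)
  qed
  with assms(2) that show ?thesis by blast
qed

lemma mcong_snoc_min_dependent:
  assumes "min_dependent D" "d \<in> D" "D - {d} \<subseteq> set w" "gen_word w"
  shows "mcong (pres_rels TYPE('a)) w (w @ [d])"
proof -
  obtain e where e: "e \<in> D" "e \<noteq> d" using min_dependent_ex_other[OF assms(1,2)] .
  obtain w1 w2 where w: "set w1 = D - {d}" "set w2 = D - {e}"
    "mcong (pres_rels TYPE('a)) w1 w2"
    using mcong_min_dependent_omit[OF finite assms(1,2) e(1)] .
  have atoms: "\<forall>a\<in>D. atom a" using assms(1) by (simp add: min_dependent_def)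
  have "mcong (pres_rels TYPE('a)) w (w @ w1)"
    using w(1) assms(3,4) by (intro mcong_append_subset) auto
  moreover have "mcong (pres_rels TYPE('a)) (w @ w1) (w @ w2)"
    using mcong_append[OF w(3), of w "[]"] by simp
  moreover have "mcong (pres_rels TYPE('a)) (w @ w2) (w @ [d])"
    using w(2) assms(2,3,4) e atoms by (intro mcong_if_set_eq) auto
  ultimately show ?thesis by (metis mcong.trans)
qed

end

locale geometric_idempotent_monoid = idempotent_monoid T
  for T :: "'a::{finite,comm_monoid_mult} itself" +
  assumes geometric: "geometric TYPE('a)"
begin

sublocale graded_idempotent_monoid T
  using geometric by unfold_locales (simp add: geometric_def)

lemma rk_mult_atom_le: "atom a \<Longrightarrow> rk (x * (a::'a)) \<le> rk x + 1"
proof -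
  assume "atom a"
  have "rk (x * a) + rk (meet x a) \<le> rk x + rk a" using geometric by (simp add: geometric_def)
  then show ?thesis using \<open>atom a\<close> by (simp add: atom_def)
qed

lemma rk_prod_le_card: "\<forall>a\<in>S. atom a \<Longrightarrow> rk (\<Prod>(S::'a set)) \<le> card S"
  using finite[of S]
proof (induction S rule: finite_induct)
  case (insert a S)
  then have "rk (\<Prod>S * a) \<le> rk (\<Prod>S) + 1" using rk_mult_atom_le by simp
  then show ?case using insert by (simp add: mult.commute)
qed simp

lemma card_le_rk_prod: "\<forall>J\<subseteq>I. independent J \<Longrightarrow> card I \<le> rk (\<Prod>(I::'a set))"
  using finite[of I]
proof (induction I rule: finite_induct)
  case (insert t J)
  have "independent (insert t J)" using insert.prems by blast
  then have "mless (join_set (insert t J - {t})) (join_set (insert t J))"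
    unfolding independent_def by blast
  moreover have "insert t J - {t} = J" using insert.hyps by auto
  ultimately have "rk (\<Prod>J) < rk (\<Prod>(insert t J))"
    using rk_strict_mono by (simp add: join_set_def)
  moreover have "card J \<le> rk (\<Prod>J)" using insert by blast
  ultimately show ?case using insert.hyps by simp
qed simp

lemma prod_min_dependent_remove:
  assumes "min_dependent (D::'a set)" "c \<in> D"
  shows "\<Prod>(D - {c}) = \<Prod>D"
proof (rule ccontr)
  assume ne: "\<Prod>(D - {c}) \<noteq> \<Prod>D"
  have "\<Prod>D = c * \<Prod>(D - {c})" using assms(2) by (simp add: prod.remove)
  then have "mless (\<Prod>(D - {c})) (\<Prod>D)" using ne mleq_mult by (simp add: mless_def)
  then have "rk (\<Prod>(D - {c})) < rk (\<Prod>D)" by (rule rk_strict_mono)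
  moreover have "\<forall>J\<subseteq>D - {c}. independent J"
    using assms unfolding min_dependent_def by blast
  then have "card (D - {c}) \<le> rk (\<Prod>(D - {c}))" by (rule card_le_rk_prod)
  ultimately have ge: "card D \<le> rk (\<Prod>D)"
    using card_Suc_Diff1[OF finite assms(2)] by linarith
  obtain s where s: "s \<in> D" "\<not> mless (join_set (D - {s})) (join_set D)"
    using assms(1) unfolding min_dependent_def independent_def by blast
  have "mleq (\<Prod>(D - {s})) (\<Prod>D)" using s(1) mleq_mult by (simp add: prod.remove)
  then have "\<Prod>(D - {s}) = \<Prod>D" using s(2) by (simp add: mless_def join_set_def)
  moreover have "rk (\<Prod>(D - {s})) \<le> card (D - {s})"
    using assms(1) by (intro rk_prod_le_card) (auto simp: min_dependent_def)
  ultimately have "rk (\<Prod>D) \<le> card (D - {s})" by simp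
  then show False using ge card_Suc_Diff1[OF finite s(1)] by linarith
qed

lemma prod_list_eq_if_pres_rels: "(x, y) \<in> pres_rels TYPE('a) \<Longrightarrow> prod_list x = prod_list y"
proof (unfold pres_rels_def, elim UnE CollectE exE conjE)
  fix a :: 'a
  assume "(x, y) = ([a, a], [a])"
  then show ?thesis by (simp add: idem)
next
  fix a b :: 'a
  assume "(x, y) = ([a, b], [b, a])"
  then show ?thesis by (simp add: mult.commute)
next
  fix xs :: "'a list" and i j
  assume "(x, y) = (omit i xs, omit j xs)" "distinct xs" "min_dependent (set xs)"
    "i < length xs" "j < length xs"
  then show ?thesis by (simp add: prod_list_eq_prod_set set_omit prod_min_dependent_remove)
qed

lemma prod_list_eq_if_mcong: "mcong (pres_rels TYPE('a)) u v \<Longrightarrow> prod_list u = prod_list v"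
  by (induction rule: mcong.induct) (auto simp: prod_list_eq_if_pres_rels)

lemma mcong_snoc_if_mleq:
  assumes "gen_word u" "atom a" "mleq a (prod_list u)"
  shows "mcong (pres_rels TYPE('a)) u (u @ [a])"
  using assms
proof (induction "card (set u)" arbitrary: u rule: less_induct)
  case less
  show ?case
  proof (cases "a \<in> set u")
    case True
    then show ?thesis using less.prems(1) by (intro mcong_snoc_member)
  next
    case False
    have "\<Prod>(insert a (set u)) = \<Prod>(set u)"
      using False less.prems(3) by (simp add: prod_list_eq_prod_set mleq_def)
    then have "\<not> independent (insert a (set u))"
      using False unfolding independent_def join_set_def mless_def by auto
    then obtain D where D: "D \<subseteq> insert a (set u)" "min_dependent D"
      using ex_min_dependent_subset[of "insert a (set u)"] less.prems(1,2) by blast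
    show ?thesis
    proof (cases "a \<in> D")
      case True
      then show ?thesis using D less.prems(1) by (intro mcong_snoc_min_dependent) auto
    next
      case False
      then have Du: "D \<subseteq> set u" using D(1) by blast
      obtain d where d: "d \<in> D" using D(2) by (auto simp: min_dependent_def independent_def)
      define w where "w = filter (\<lambda>x. x \<noteq> d) u"
      have w: "set w = set u - {d}" by (auto simp: w_def)
      \<comment> \<open>d is redundant in u: the rest of the circuit D already occurs in w\<close>
      have "mcong (pres_rels TYPE('a)) w (w @ [d])"
        using D(2) d Du w less.prems(1) by (intro mcong_snoc_min_dependent) auto
      moreover have "mcong (pres_rels TYPE('a)) (w @ [d]) u"
        using d Du w less.prems(1) by (intro mcong_if_set_eq) auto
      ultimately have wu: "mcong (pres_rels TYPE('a)) w u" by (rule mcong.trans)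
      have "card (set w) < card (set u)"
        unfolding w by (rule card_Diff1_less) (use d Du in auto)
      then have "mcong (pres_rels TYPE('a)) w (w @ [a])"
        using less w prod_list_eq_if_mcong[OF wu] by auto
      moreover have "mcong (pres_rels TYPE('a)) (w @ [a]) (u @ [a])"
        using mcong_append[OF wu, of "[]" "[a]"] by simp
      ultimately show ?thesis using wu by (meson mcong.sym mcong.trans)
    qed
  qed
qed

lemma mcong_append_if_mleq:
  "gen_word u \<Longrightarrow> gen_word v \<Longrightarrow> \<forall>b\<in>set v. mleq b (prod_list u) \<Longrightarrow>
    mcong (pres_rels TYPE('a)) u (u @ v)"
proof (induction v arbitrary: u)
  case Nil
  then show ?case by (simp add: mcong.refl)
next
  case (Cons b v)
  have "mcong (pres_rels TYPE('a)) u (u @ [b])" using Cons.prems by (intro mcong_snoc_if_mleq) auto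
  moreover have "prod_list (u @ [b]) = prod_list u"
    using Cons.prems(3) by (simp add: mleq_def mult.commute)
  then have "mcong (pres_rels TYPE('a)) (u @ [b]) ((u @ [b]) @ v)"
    using Cons.prems by (intro Cons.IH) auto
  ultimately show ?case by (auto intro: mcong.trans)
qed

lemma prod_list_eq_iff_mcong:
  assumes "gen_word u" "gen_word v"
  shows "prod_list u = prod_list v \<longleftrightarrow> mcong (pres_rels TYPE('a)) u v"
proof
  assume eq: "prod_list u = prod_list v"
  have "mcong (pres_rels TYPE('a)) u (u @ v)"
    using assms eq by (intro mcong_append_if_mleq) (auto simp: prod_list_eq_prod_set mleq_prod)
  moreover have "mcong (pres_rels TYPE('a)) v (v @ u)"
    using assms eq[symmetric] by (intro mcong_append_if_mleq) (auto simp: prod_list_eq_prod_set mleq_prod)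
  moreover have "mcong (pres_rels TYPE('a)) (u @ v) (v @ u)"
    using assms by (rule mcong_append_commute)
  ultimately show "mcong (pres_rels TYPE('a)) u v" by (meson mcong.sym mcong.trans)
qed (rule prod_list_eq_if_mcong)

lemma ex_atom_word: "\<exists>w. gen_word w \<and> prod_list w = (x::'a)"
proof -
  have "atomic TYPE('a)" using geometric by (simp add: geometric_def)
  then obtain S where S: "\<forall>a\<in>S. atom a" "x = join_set S" unfolding atomic_def by blast
  obtain w where "set w = S" using finite_list[OF finite] by blast
  then show ?thesis using S by (auto simp: prod_list_eq_prod_set join_set_def)
qed

end

theorem theorem1:
  assumes "\<forall>x::'a::{finite,comm_monoid_mult}. x * x = x"
    and "geometric TYPE('a)"
  shows "has_presentation TYPE('a) atom (pres_rels TYPE('a))"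
proof -
  interpret geometric_idempotent_monoid "TYPE('a)"
    using assms by unfold_locales auto
  show ?thesis
    unfolding has_presentation_def using ex_atom_word prod_list_eq_iff_mcong by blast
qed

end
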